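(* Let $\Omega\subset\mathbb{R}^N$ be a bounded domain satisfying $(F_j)$ and $(F_{N-j+1})$, let $u_0\in C(\overline\Omega)$ and let $g$ be continuous and time independent with $u_0=g$ on $\partial\Omega$. Suppose there are an affine function $\pi$, a unit vector $w\in\mathbb{R}^N$ and $\theta\in\mathbb{R}$ such that $g(x)=\pi(x)$ for every $x\in\mathbb{R}^N\setminus\Omega$ with $x\cdot w>\theta$. Let $u$ be the viscosity solution of $u_t-\lambda_j(D^2u)=0$ in $\Omega\times(0,\infty)$, $u=g$ on $\partial\Omega\times(0,\infty)$, $u(\cdot,0)=u_0$. Then for every $y\in\Omega$ with $y\cdot w>\theta$ there exists $t_y>0$ such that: if $1\le j\le N-1$, then $u(y,t)\le\pi(y)$ for all $t>t_y$; and if $2\le j\le N$, then $u(y,t)\ge\pi(y)$ for all $t>t_y$. In particular, for $2\le j\le N-1$, $u(y,t)=\pi(y)$ for all $t>t_y$.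
   Context: $\lambda_j(A)$ is the $j$-th smallest eigenvalue of a symmetric matrix $A$, $\lambda_j(A)=\inf_{\dim S=j}\sup_{v\in S,|v|=1}\langle Av,v\rangle$; solutions are viscosity solutions continuous up to the boundary. (Outside $\Omega$, $g$ denotes a continuous extension of the boundary datum used as game payoff; the hypothesis is that this extension equals $\pi$ on the given half-space.) Condition $(F_k)$: for every $y\in\partial\Omega$ there is $r>0$ such that for every $\delta>0$ there exist a $k$-dimensional subspace $T$, a unit vector $w'$, $\lambda>0$, $\theta'>0$ with $\{x\in\Omega\cap B_r(y):\operatorname{dist}(x-y,T)<\lambda,\ \langle w',x-y\rangle<\theta'\}\subset B_\delta(y)$. *)

theory Defs
  imports "HOL-Analysis.Analysis"
begin

text \<open>j-th smallest eigenvalue via the Courant--Fischer min-max formula.\<close>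
definition eig :: "nat \<Rightarrow> real^'n^'n \<Rightarrow> real" where
  "eig j A = Inf {Sup {(A *v v) \<bullet> v | v. v \<in> S \<and> norm v = 1} | S.
                     subspace S \<and> dim S = j}"

definition cond_F :: "nat \<Rightarrow> (real^'n) set \<Rightarrow> bool" where
  "cond_F k \<Omega> \<longleftrightarrow> (\<forall>y\<in>frontier \<Omega>. \<exists>r>0. \<forall>\<delta>>0.
      \<exists>T w' lam th'. subspace T \<and> dim T = k \<and> norm w' = 1 \<and> lam > 0 \<and> th' > 0 \<and>
        {x \<in> \<Omega> \<inter> ball y r. infdist (x - y) T < lam \<and> w' \<bullet> (x - y) < th'} \<subseteq> ball y \<delta>)"

definition test_fun ::
  "(real^'n \<Rightarrow> real \<Rightarrow> real) \<Rightarrow> (real^'n \<Rightarrow> real \<Rightarrow> real) \<Rightarrow> (real^'n \<Rightarrow> real \<Rightarrow> real^'n)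
     \<Rightarrow> (real^'n \<Rightarrow> real \<Rightarrow> real^'n^'n) \<Rightarrow> ((real^'n) \<times> real) set \<Rightarrow> bool" where
  "test_fun phi phit Dphi D2phi U \<longleftrightarrow> open U \<and>
     continuous_on U (\<lambda>(y,s). phi y s) \<and>
     continuous_on U (\<lambda>(y,s). phit y s) \<and>
     continuous_on U (\<lambda>(y,s). Dphi y s) \<and>
     continuous_on U (\<lambda>(y,s). D2phi y s) \<and>
     (\<forall>(y,s)\<in>U. ((\<lambda>r. phi y r) has_real_derivative phit y s) (at s) \<and>
        ((\<lambda>z. phi z s) has_derivative (\<lambda>h. Dphi y s \<bullet> h)) (at y) \<and>
        ((\<lambda>z. Dphi z s) has_derivative (\<lambda>h. D2phi y s *v h)) (at y))"

definition visc_sub :: "nat \<Rightarrow> (real^'n) set \<Rightarrow> (real^'n \<Rightarrow> real \<Rightarrow> real) \<Rightarrow> bool" where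
  "visc_sub j \<Omega> u \<longleftrightarrow> (\<forall>x t phi phit Dphi D2phi U.
      x \<in> \<Omega> \<and> t > 0 \<and> (x,t) \<in> U \<and> U \<subseteq> \<Omega> \<times> {0<..} \<and> test_fun phi phit Dphi D2phi U \<and>
      (\<forall>(y,s)\<in>U. u y s - phi y s \<le> u x t - phi x t)
      \<longrightarrow> phit x t - eig j (D2phi x t) \<le> 0)"

definition visc_super :: "nat \<Rightarrow> (real^'n) set \<Rightarrow> (real^'n \<Rightarrow> real \<Rightarrow> real) \<Rightarrow> bool" where
  "visc_super j \<Omega> u \<longleftrightarrow> (\<forall>x t phi phit Dphi D2phi U.
      x \<in> \<Omega> \<and> t > 0 \<and> (x,t) \<in> U \<and> U \<subseteq> \<Omega> \<times> {0<..} \<and> test_fun phi phit Dphi D2phi U \<and>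
      (\<forall>(y,s)\<in>U. u y s - phi y s \<ge> u x t - phi x t)
      \<longrightarrow> phit x t - eig j (D2phi x t) \<ge> 0)"

definition visc_solution ::
  "nat \<Rightarrow> (real^'n) set \<Rightarrow> (real^'n \<Rightarrow> real) \<Rightarrow> (real^'n \<Rightarrow> real) \<Rightarrow> (real^'n \<Rightarrow> real \<Rightarrow> real) \<Rightarrow> bool" where
  "visc_solution j \<Omega> g u0 u \<longleftrightarrow>
     continuous_on (closure \<Omega> \<times> {0..}) (\<lambda>(x,t). u x t) \<and>
     visc_sub j \<Omega> u \<and> visc_super j \<Omega> u \<and>
     (\<forall>x\<in>frontier \<Omega>. \<forall>t>0. u x t = g x) \<and>
     (\<forall>x\<in>closure \<Omega>. u x 0 = u0 x)"

end

theory Submission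
  imports Defs
begin

text \<open>
  Both halves of the theorem reduce to one statement about subsolutions: for a subsolution \<open>u\<close>
  of \<open>u\<^sub>t - E(D\<^sup>2u) = 0\<close>, where the operator \<open>E\<close> satisfies \<open>E(A) \<le> \<mu>\<close> as soon as the
  quadratic form of \<open>A\<close> is \<open>\<le> \<mu>\<close> on some hyperplane, \<open>u(y,t) \<le> \<pi>(y)\<close> for large \<open>t\<close>.
  By the min-max formula, \<open>\<lambda>\<^sub>j\<close> has this property for \<open>j \<le> N - 1\<close>, and \<open>A \<mapsto> -\<lambda>\<^sub>j(-A)\<close>,
  for which \<open>-u\<close> is a subsolution when \<open>u\<close> is a supersolution, has it for \<open>j \<ge> 2\<close>.

  The statement is proved by comparison on \<open>D = \<Omega> \<inter> {x \<cdot> w > \<theta>\<^sub>2}\<close> with the barrier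
  \<open>\<pi>(x) + M (1 - t + F(x))\<^sub>+\<^sup>3 + \<epsilon> t\<close>, where \<open>F(x) = C/(x \<cdot> w - \<theta>') - |x - y|\<^sup>2 + Q\<close>.
  On the hyperplane orthogonal to \<open>\<nabla>F\<close> the Hessian of the barrier is a nonnegative multiple
  of \<open>D\<^sup>2F\<close>, which is negative definite there once \<open>C\<close> is large, so the barrier is a strict
  supersolution. It dominates \<open>u\<close> on the parabolic boundary: \<open>u = \<pi>\<close> on \<open>\<partial>\<Omega> \<inter> {x \<cdot> w > \<theta>}\<close>,
  while \<open>F\<close> is large on the cut \<open>x \<cdot> w = \<theta>\<^sub>2\<close> and nonnegative at \<open>t = 0\<close>, where the cubic
  term is at least \<open>M\<close>. At \<open>x = y\<close> the cubic term vanishes for \<open>t \<ge> F(y) + 1\<close>; letting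
  \<open>\<epsilon> \<rightarrow> 0\<close> gives the claim. The conditions \<open>(F\<^sub>k)\<close>, connectedness and the compatibility
  \<open>u\<^sub>0 = g\<close> on \<open>\<partial>\<Omega>\<close> serve existence and uniqueness in the paper and are not used here.
\<close>

section \<open>Min-max bounds for \<open>\<lambda>\<^sub>j\<close>\<close>

lemma matrix_vector_mult_uminus:
  fixes A :: "real^'n^'m"
  shows "(- A) *v v = - (A *v v)"
  by (simp add: matrix_vector_mult_def vec_eq_iff sum_negf)

lemma quadratic_form_bounded_on_sphere:
  fixes A :: "real^'n^'n"
  obtains C where "\<And>v. norm v = 1 \<Longrightarrow> \<bar>(A *v v) \<bullet> v\<bar> \<le> C"
proof -
  have "compact ((\<lambda>v. (A *v v) \<bullet> v) ` sphere 0 1)"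
    by (intro compact_continuous_image continuous_intros) simp
  then obtain C where "\<forall>z\<in>(\<lambda>v. (A *v v) \<bullet> v) ` sphere 0 1. norm z \<le> C"
    using compact_imp_bounded bounded_iff by metis
  then show ?thesis by (intro that[of C]) simp
qed

lemma bdd_above_quadratic_form:
  fixes A :: "real^'n^'n"
  shows "bdd_above {(A *v v) \<bullet> v | v. v \<in> S \<and> norm v = 1}"
proof -
  obtain C where "\<And>v. norm v = 1 \<Longrightarrow> \<bar>(A *v v) \<bullet> v\<bar> \<le> C"
    using quadratic_form_bounded_on_sphere by blast
  then show ?thesis by (intro bdd_aboveI[where M = C]) force
qed

lemma subspace_obtain_unit_vector:
  fixes S :: "(real^'n) set"
  assumes "subspace S" "dim S \<ge> 1"
  obtains v where "v \<in> S" "norm v = 1"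
proof -
  obtain x where x: "x \<in> S" "x \<noteq> 0"
    using assms dim_eq_0 by (metis le_zero_eq not_one_le_zero subsetI singletonI)
  show ?thesis
    using that[of "(1 / norm x) *\<^sub>R x"] x assms(1) by (simp add: subspace_scale)
qed

lemma eig_le_if_subspace:
  fixes A :: "real^'n^'n"
  assumes "1 \<le> j" "subspace S" "dim S = j"
    and "\<And>v. v \<in> S \<Longrightarrow> norm v = 1 \<Longrightarrow> (A *v v) \<bullet> v \<le> \<mu>"
  shows "eig j A \<le> \<mu>"
proof -
  let ?R = "\<lambda>S. {(A *v v) \<bullet> v | v. v \<in> S \<and> norm v = 1}"
  obtain C where C: "\<And>v. norm v = 1 \<Longrightarrow> \<bar>(A *v v) \<bullet> v\<bar> \<le> C"
    using quadratic_form_bounded_on_sphere by blast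
  have "bdd_below {Sup (?R T) | T. subspace T \<and> dim T = j}"
  proof (rule bdd_belowI[where m = "-C"])
    fix x assume "x \<in> {Sup (?R T) | T. subspace T \<and> dim T = j}"
    then obtain T where T: "subspace T" "dim T = j" "x = Sup (?R T)" by blast
    then obtain v where v: "v \<in> T" "norm v = 1"
      using subspace_obtain_unit_vector assms(1) by metis
    then have "(A *v v) \<bullet> v \<le> Sup (?R T)"
      by (intro cSup_upper bdd_above_quadratic_form) blast
    then show "-C \<le> x" using C[OF v(2)] T(3) by linarith
  qed
  then have "eig j A \<le> Sup (?R S)"
    unfolding eig_def using assms(2,3) by (intro cInf_lower) blast+
  also have "\<dots> \<le> \<mu>"
  proof (rule cSup_least)
    obtain v where "v \<in> S" "norm v = 1"
      using subspace_obtain_unit_vector assms(1-3) by metis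
    then show "?R S \<noteq> {}" by blast
  qed (use assms(4) in blast)
  finally show ?thesis .
qed

text \<open>Every \<open>j\<close>-dimensional subspace meets \<open>V\<close> nontrivially when \<open>dim V + j > N\<close>.\<close>
lemma eig_ge_if_subspace:
  fixes A :: "real^'n^'n"
  assumes "j \<le> CARD('n)" "subspace V" "dim V + j > CARD('n)"
    and "\<And>v. v \<in> V \<Longrightarrow> norm v = 1 \<Longrightarrow> (A *v v) \<bullet> v \<ge> \<mu>"
  shows "eig j A \<ge> \<mu>"
  unfolding eig_def
proof (rule cInf_greatest)
  obtain S :: "(real^'n) set" where "subspace S" "dim S = j"
    using choose_subspace_of_subspace[of j "UNIV :: (real^'n) set"] assms(1) by auto
  then show "{Sup {(A *v v) \<bullet> v | v. v \<in> S \<and> norm v = 1} | S. subspace S \<and> dim S = j} \<noteq> {}"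
    by blast
next
  fix x assume "x \<in> {Sup {(A *v v) \<bullet> v | v. v \<in> S \<and> norm v = 1} | S. subspace S \<and> dim S = j}"
  then obtain T where T: "subspace T" "dim T = j" "x = Sup {(A *v v) \<bullet> v | v. v \<in> T \<and> norm v = 1}"
    by blast
  have "dim {x + y |x y. x \<in> T \<and> y \<in> V} \<le> CARD('n)"
    using dim_subset_UNIV[of "{x + y |x y. x \<in> T \<and> y \<in> V}"] by simp
  then have "dim (T \<inter> V) \<ge> 1"
    using dim_sums_Int[OF T(1) assms(2)] T(2) assms(3) by linarith
  then obtain v where v: "v \<in> T \<inter> V" "norm v = 1"
    using subspace_obtain_unit_vector subspace_inter[OF T(1) assms(2)] by metis
  then have "(A *v v) \<bullet> v \<le> x"
    unfolding T(3) by (intro cSup_upper bdd_above_quadratic_form) blast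
  then show "\<mu> \<le> x" using assms(4) v by force
qed

lemma dim_hyperplane_ge:
  fixes a :: "real^'n"
  shows "dim {v. a \<bullet> v = 0} \<ge> CARD('n) - 1"
  by (cases "a = 0") (simp_all add: dim_hyperplane)

lemma eig_le_if_hyperplane:
  fixes A :: "real^'n^'n"
  assumes "1 \<le> j" "j < CARD('n)"
    and "\<And>v. a \<bullet> v = 0 \<Longrightarrow> norm v = 1 \<Longrightarrow> (A *v v) \<bullet> v \<le> \<mu>"
  shows "eig j A \<le> \<mu>"
proof -
  have "j \<le> dim {v. a \<bullet> v = 0}" using dim_hyperplane_ge[of a] assms(2) by linarith
  then obtain S where S: "subspace S" "S \<subseteq> {v. a \<bullet> v = 0}" "dim S = j"
    using choose_subspace_of_subspace span_eq_iff subspace_hyperplane by metis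
  show ?thesis using eig_le_if_subspace[OF assms(1) S(1,3)] S(2) assms(3) by blast
qed

lemma eig_ge_if_hyperplane:
  fixes A :: "real^'n^'n"
  assumes "2 \<le> j" "j \<le> CARD('n)"
    and "\<And>v. a \<bullet> v = 0 \<Longrightarrow> norm v = 1 \<Longrightarrow> (A *v v) \<bullet> v \<ge> \<mu>"
  shows "eig j A \<ge> \<mu>"
  using assms dim_hyperplane_ge[of a]
  by (intro eig_ge_if_subspace[OF assms(2) subspace_hyperplane]) auto

lemma eig_zero:
  assumes "1 \<le> j" "j \<le> CARD('n)"
  shows "eig j (0 :: real^'n^'n) = 0"
proof (rule antisym)
  obtain S :: "(real^'n) set" where "subspace S" "dim S = j"
    using choose_subspace_of_subspace[of j "UNIV :: (real^'n) set"] assms(2) by auto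
  then show "eig j (0 :: real^'n^'n) \<le> 0" using assms(1) by (intro eig_le_if_subspace) auto
  show "eig j (0 :: real^'n^'n) \<ge> 0"
    using assms by (intro eig_ge_if_subspace[of j UNIV]) auto
qed

section \<open>Viscosity subsolutions and the comparison principle\<close>

definition viscosity_subsolution ::
  "(real^'n^'n \<Rightarrow> real) \<Rightarrow> (real^'n) set \<Rightarrow> (real^'n \<Rightarrow> real \<Rightarrow> real) \<Rightarrow> bool" where
  "viscosity_subsolution E \<Omega> u \<longleftrightarrow> (\<forall>x t phi phit Dphi D2phi U.
      x \<in> \<Omega> \<and> t > 0 \<and> (x,t) \<in> U \<and> U \<subseteq> \<Omega> \<times> {0<..} \<and> test_fun phi phit Dphi D2phi U \<and>
      (\<forall>(y,s)\<in>U. u y s - phi y s \<le> u x t - phi x t)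
      \<longrightarrow> phit x t - E (D2phi x t) \<le> 0)"

lemma visc_sub_iff_viscosity_subsolution:
  "visc_sub j \<Omega> u \<longleftrightarrow> viscosity_subsolution (eig j) \<Omega> u"
  unfolding visc_sub_def viscosity_subsolution_def ..

lemma viscosity_subsolution_subset:
  assumes "viscosity_subsolution E \<Omega> u" "D \<subseteq> \<Omega>"
  shows "viscosity_subsolution E D u"
  unfolding viscosity_subsolution_def
proof (intro allI impI, elim conjE)
  fix x t \<phi> \<phi>t D\<phi> D2\<phi> U
  assume "x \<in> D" "0 < t" "(x, t) \<in> U" "U \<subseteq> D \<times> {0<..}" "test_fun \<phi> \<phi>t D\<phi> D2\<phi> U"
    "\<forall>(y, s)\<in>U. u y s - \<phi> y s \<le> u x t - \<phi> x t"
  moreover have "x \<in> \<Omega>" "U \<subseteq> \<Omega> \<times> {0<..}" using assms(2) \<open>x \<in> D\<close> \<open>U \<subseteq> D \<times> {0<..}\<close> by auto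
  ultimately show "\<phi>t x t - E (D2\<phi> x t) \<le> 0"
    using assms(1)[unfolded viscosity_subsolution_def, rule_format, of x t U \<phi> \<phi>t D\<phi> D2\<phi>] by simp
qed

lemma test_fun_subset:
  "test_fun \<phi> \<phi>t D\<phi> D2\<phi> U \<Longrightarrow> open V \<Longrightarrow> V \<subseteq> U \<Longrightarrow> test_fun \<phi> \<phi>t D\<phi> D2\<phi> V"
  unfolding test_fun_def by (auto intro: continuous_on_subset)

lemma test_fun_derivatives:
  assumes "test_fun \<phi> \<phi>t D\<phi> D2\<phi> U" "(y, s) \<in> U"
  shows "((\<lambda>r. \<phi> y r) has_real_derivative \<phi>t y s) (at s)"
    and "((\<lambda>z. \<phi> z s) has_derivative (\<lambda>h. D\<phi> y s \<bullet> h)) (at y)"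
    and "((\<lambda>z. D\<phi> z s) has_derivative (\<lambda>h. D2\<phi> y s *v h)) (at y)"
proof -
  have "\<forall>(y, s)\<in>U. ((\<lambda>r. \<phi> y r) has_real_derivative \<phi>t y s) (at s) \<and>
        ((\<lambda>z. \<phi> z s) has_derivative (\<lambda>h. D\<phi> y s \<bullet> h)) (at y) \<and>
        ((\<lambda>z. D\<phi> z s) has_derivative (\<lambda>h. D2\<phi> y s *v h)) (at y)"
    using assms(1) unfolding test_fun_def by (elim conjE) assumption
  from bspec[OF this assms(2)] show "((\<lambda>r. \<phi> y r) has_real_derivative \<phi>t y s) (at s)"
    and "((\<lambda>z. \<phi> z s) has_derivative (\<lambda>h. D\<phi> y s \<bullet> h)) (at y)"
    and "((\<lambda>z. D\<phi> z s) has_derivative (\<lambda>h. D2\<phi> y s *v h)) (at y)"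
    by (simp_all only: case_prod_conv)
qed

lemma test_funI:
  assumes "open U"
    and "continuous_on U (\<lambda>p. \<phi> (fst p) (snd p))" "continuous_on U (\<lambda>p. \<phi>t (fst p) (snd p))"
    and "continuous_on U (\<lambda>p. D\<phi> (fst p) (snd p))" "continuous_on U (\<lambda>p. D2\<phi> (fst p) (snd p))"
    and "\<And>y s. (y, s) \<in> U \<Longrightarrow> ((\<lambda>r. \<phi> y r) has_real_derivative \<phi>t y s) (at s)"
    and "\<And>y s. (y, s) \<in> U \<Longrightarrow> ((\<lambda>z. \<phi> z s) has_derivative (\<lambda>h. D\<phi> y s \<bullet> h)) (at y)"
    and "\<And>y s. (y, s) \<in> U \<Longrightarrow> ((\<lambda>z. D\<phi> z s) has_derivative (\<lambda>h. D2\<phi> y s *v h)) (at y)"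
  shows "test_fun \<phi> \<phi>t D\<phi> D2\<phi> U"
  unfolding test_fun_def case_prod_beta'
  using assms by (intro conjI ballI) (simp_all only: prod.collapse)

lemma test_fun_continuous:
  assumes "test_fun \<phi> \<phi>t D\<phi> D2\<phi> U"
  shows "open U"
    and "continuous_on U (\<lambda>p. \<phi> (fst p) (snd p))" "continuous_on U (\<lambda>p. \<phi>t (fst p) (snd p))"
    and "continuous_on U (\<lambda>p. D\<phi> (fst p) (snd p))" "continuous_on U (\<lambda>p. D2\<phi> (fst p) (snd p))"
  using assms unfolding test_fun_def case_prod_beta' by blast+

lemma test_fun_uminus:
  assumes "test_fun \<phi> \<phi>t D\<phi> D2\<phi> U"
  shows "test_fun (\<lambda>y s. - \<phi> y s) (\<lambda>y s. - \<phi>t y s) (\<lambda>y s. - D\<phi> y s) (\<lambda>y s. - D2\<phi> y s) U"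
proof (rule test_funI)
  note c = test_fun_continuous[OF assms]
  show "open U" by (fact c(1))
  show "continuous_on U (\<lambda>p. - \<phi> (fst p) (snd p))" "continuous_on U (\<lambda>p. - \<phi>t (fst p) (snd p))"
    "continuous_on U (\<lambda>p. - D\<phi> (fst p) (snd p))" "continuous_on U (\<lambda>p. - D2\<phi> (fst p) (snd p))"
    by (fact continuous_on_minus[OF c(2)] continuous_on_minus[OF c(3)]
        continuous_on_minus[OF c(4)] continuous_on_minus[OF c(5)])+
  fix y s assume "(y, s) \<in> U"
  note d = test_fun_derivatives[OF assms this]
  show "((\<lambda>r. - \<phi> y r) has_real_derivative - \<phi>t y s) (at s)" by (rule DERIV_minus[OF d(1)])
  show "((\<lambda>z. - \<phi> z s) has_derivative (\<lambda>h. - D\<phi> y s \<bullet> h)) (at y)"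
    by (rule has_derivative_eq_rhs[OF has_derivative_minus[OF d(2)]]) simp
  show "((\<lambda>z. - D\<phi> z s) has_derivative (\<lambda>h. - D2\<phi> y s *v h)) (at y)"
    by (rule has_derivative_eq_rhs[OF has_derivative_minus[OF d(3)]]) (simp add: matrix_vector_mult_uminus)
qed

text \<open>A supersolution of \<open>u\<^sub>t - \<lambda>\<^sub>j(D\<^sup>2u) = 0\<close> is, after negation, a subsolution for the
  operator \<open>A \<mapsto> -\<lambda>\<^sub>j(-A)\<close>; this lets every comparison argument be run for subsolutions only.\<close>
lemma visc_super_imp_viscosity_subsolution_uminus:
  assumes "visc_super j \<Omega> u"
  shows "viscosity_subsolution (\<lambda>A. - eig j (- A)) \<Omega> (\<lambda>x t. - u x t)"
  unfolding viscosity_subsolution_def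
proof (intro allI impI, elim conjE)
  fix x t \<phi> \<phi>t D\<phi> D2\<phi> U
  assume xt: "x \<in> \<Omega>" "0 < t" "(x, t) \<in> U" "U \<subseteq> \<Omega> \<times> {0<..}" and tf: "test_fun \<phi> \<phi>t D\<phi> D2\<phi> U"
    and max: "\<forall>(y, s)\<in>U. - u y s - \<phi> y s \<le> - u x t - \<phi> x t"
  have min: "\<forall>(y, s)\<in>U. u x t - - \<phi> x t \<le> u y s - - \<phi> y s" using max by auto
  have "- \<phi>t x t - eig j (- D2\<phi> x t) \<ge> 0"
    using assms[unfolded visc_super_def, rule_format, of x t U "\<lambda>y s. - \<phi> y s" "\<lambda>y s. - \<phi>t y s"
        "\<lambda>y s. - D\<phi> y s" "\<lambda>y s. - D2\<phi> y s", OF conjI[OF xt(1) conjI[OF xt(2) conjI[OF xt(3)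
        conjI[OF xt(4) conjI[OF test_fun_uminus[OF tf] min]]]]]] .
  then show "\<phi>t x t - - eig j (- D2\<phi> x t) \<le> 0" by linarith
qed

lemma test_fun_add_blowup:
  assumes tf: "test_fun \<phi> \<phi>t D\<phi> D2\<phi> U" and U: "U \<subseteq> UNIV \<times> {..<T}"
  shows "test_fun (\<lambda>y s. \<phi> y s + c / (T - s)) (\<lambda>y s. \<phi>t y s + c / (T - s)\<^sup>2) D\<phi> D2\<phi> U"
proof (rule test_funI)
  note c = test_fun_continuous[OF tf]
  have pen: "continuous_on U (\<lambda>p. c / (T - snd p))" "continuous_on U (\<lambda>p. c / (T - snd p)\<^sup>2)"
    using U by (auto intro!: continuous_intros)
  show "continuous_on U (\<lambda>p. \<phi> (fst p) (snd p) + c / (T - snd p))"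
    by (rule continuous_on_add[OF c(2) pen(1)])
  show "continuous_on U (\<lambda>p. \<phi>t (fst p) (snd p) + c / (T - snd p)\<^sup>2)"
    by (rule continuous_on_add[OF c(3) pen(2)])
  fix y s assume ys: "(y, s) \<in> U"
  note d = test_fun_derivatives[OF tf ys]
  have "s < T" using U ys by auto
  then have "((\<lambda>r. c / (T - r)) has_real_derivative c / (T - s)\<^sup>2) (at s)"
    by (auto intro!: derivative_eq_intros simp: power2_eq_square field_simps)
  then show "((\<lambda>r. \<phi> y r + c / (T - r)) has_real_derivative \<phi>t y s + c / (T - s)\<^sup>2) (at s)"
    by (rule DERIV_add[OF d(1)])
  show "((\<lambda>z. \<phi> z s + c / (T - s)) has_derivative (\<lambda>h. D\<phi> y s \<bullet> h)) (at y)"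
    by (rule has_derivative_add_const[OF d(2)])
  show "((\<lambda>z. D\<phi> z s) has_derivative (\<lambda>h. D2\<phi> y s *v h)) (at y)" by (fact d(3))
qed (fact test_fun_continuous[OF tf])+

text \<open>The penalty \<open>c/(T - t)\<close> keeps the maximum away from the top \<open>t = T\<^sub>1\<close> of the compact
  cylinder, so that it is attained in the open cylinder, where test functions apply.\<close>
lemma penalized_interior_maximum:
  fixes D :: "'a::heine_borel set" and f :: "'a \<Rightarrow> real \<Rightarrow> real"
  assumes "open D" "bounded D"
    and cont: "continuous_on (closure D \<times> {0..T}) (\<lambda>(x,t). f x t)"
    and bdry: "\<And>x t. x \<in> frontier D \<Longrightarrow> 0 < t \<Longrightarrow> t < T \<Longrightarrow> f x t \<le> 0"
    and init: "\<And>x. x \<in> closure D \<Longrightarrow> f x 0 \<le> 0"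
    and x0: "x0 \<in> closure D" "0 \<le> t0" "t0 < T" "f x0 t0 > 0"
  obtains c T1 x1 t1 where "c > 0" "T1 < T" "x1 \<in> D" "0 < t1" "t1 < T1"
    "\<And>y s. y \<in> D \<Longrightarrow> 0 < s \<Longrightarrow> s < T1 \<Longrightarrow> f y s - c / (T - s) \<le> f x1 t1 - c / (T - t1)"
proof -
  define d where "d = f x0 t0"
  have "compact (closure D \<times> {0..T})" using assms(2) by (simp add: compact_Times)
  then obtain B where "\<And>p. p \<in> closure D \<times> {0..T} \<Longrightarrow> norm ((\<lambda>(x,t). f x t) p) \<le> B"
    using continuous_on_compact_bound[OF _ cont] by blast
  then have B: "\<And>x t. x \<in> closure D \<Longrightarrow> 0 \<le> t \<Longrightarrow> t \<le> T \<Longrightarrow> f x t \<le> B"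
    by (metis (lifting) SigmaI abs_le_iff atLeastAtMost_iff case_prod_conv real_norm_def)
  have "d \<le> B" using B x0 unfolding d_def by simp
  define c where "c = d * (T - t0) / 4"
  define \<eta> where "\<eta> = min ((T - t0) / 2) (c / (2 * B))"
  define T1 where "T1 = T - \<eta>"
  have c: "c > 0" and "B > 0" using x0 \<open>d \<le> B\<close> by (simp_all add: c_def d_def)
  have "\<eta> > 0" using c \<open>B > 0\<close> x0 by (simp add: \<eta>_def)
  moreover have "\<eta> \<le> (T - t0) / 2" "\<eta> \<le> c / (2 * B)"
    unfolding \<eta>_def by (rule min.cobounded1, rule min.cobounded2)
  ultimately have "t0 < T1" "T1 < T" "c / \<eta> \<ge> 2 * B"
    using \<open>B > 0\<close> by (auto simp: T1_def field_simps)
  define h where "h = (\<lambda>(x,t). f x t - c / (T - t))"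
  have "continuous_on (closure D \<times> {0..T1}) h"
    unfolding h_def case_prod_beta' using \<open>T1 < T\<close>
    by (intro continuous_intros continuous_on_subset[OF cont[unfolded case_prod_beta']]) auto
  moreover have "compact (closure D \<times> {0..T1})" using assms(2) by (simp add: compact_Times)
  moreover have "(x0, t0) \<in> closure D \<times> {0..T1}" using x0 \<open>t0 < T1\<close> by simp
  ultimately obtain p where "p \<in> closure D \<times> {0..T1}" and "\<forall>q \<in> closure D \<times> {0..T1}. h q \<le> h p"
    using continuous_attains_sup[of "closure D \<times> {0..T1}" h] by blast
  then obtain x1 t1 where x1: "x1 \<in> closure D" "0 \<le> t1" "t1 \<le> T1"
    and max: "\<And>y s. y \<in> closure D \<Longrightarrow> 0 \<le> s \<Longrightarrow> s \<le> T1 \<Longrightarrow> h (y, s) \<le> h (x1, t1)"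
    by (cases p) auto
  have "h (x0, t0) = d - d / 4" using x0 by (simp add: h_def c_def d_def field_simps)
  then have hpos: "h (x1, t1) > 0" using max[of x0 t0] x0 \<open>t0 < T1\<close> d_def by linarith
  have "t1 \<noteq> 0"
  proof
    assume "t1 = 0"
    moreover have "c / T > 0" using c x0 by simp
    ultimately show False using hpos init[OF x1(1)] by (simp add: h_def)
  qed
  have "t1 \<noteq> T1"
  proof
    assume "t1 = T1"
    then have "h (x1, t1) = f x1 T1 - c / \<eta>" by (simp add: h_def T1_def)
    moreover have "f x1 T1 \<le> B" using B[OF x1(1)] x1 \<open>T1 < T\<close> by simp
    ultimately show False using hpos \<open>c / \<eta> \<ge> 2 * B\<close> \<open>B > 0\<close> by linarith
  qed
  have "x1 \<in> D"
  proof (rule ccontr)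
    assume "x1 \<notin> D"
    then have "x1 \<in> frontier D" using x1(1) \<open>open D\<close> by (simp add: frontier_def interior_open)
    moreover have "c / (T - t1) > 0" using c x1 \<open>T1 < T\<close> by simp
    ultimately show False
      using hpos bdry[of x1 t1] x1 \<open>t1 \<noteq> 0\<close> \<open>T1 < T\<close> by (simp add: h_def)
  qed
  show ?thesis
  proof (rule that[OF c \<open>T1 < T\<close> \<open>x1 \<in> D\<close>])
    show "0 < t1" "t1 < T1" using x1 \<open>t1 \<noteq> 0\<close> \<open>t1 \<noteq> T1\<close> by simp_all
    fix y s assume "y \<in> D" "0 < s" "s < T1"
    then show "f y s - c / (T - s) \<le> f x1 t1 - c / (T - t1)"
      using max[of y s] closure_subset by (auto simp: h_def)
  qed
qed

lemma subsolution_le_strict_supersolution: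
  fixes D :: "(real^'n) set"
  assumes "open D" "bounded D" and sub: "viscosity_subsolution E D u"
    and u: "continuous_on (closure D \<times> {0..T}) (\<lambda>(x,t). u x t)"
    and tf: "test_fun \<Psi> \<Psi>t D\<Psi> D2\<Psi> (D \<times> {0<..<T})"
    and \<Psi>: "continuous_on (closure D \<times> {0..T}) (\<lambda>(x,t). \<Psi> x t)"
    and strict: "\<And>x t. x \<in> D \<Longrightarrow> 0 < t \<Longrightarrow> t < T \<Longrightarrow> \<Psi>t x t - E (D2\<Psi> x t) > 0"
    and bdry: "\<And>x t. x \<in> frontier D \<Longrightarrow> 0 < t \<Longrightarrow> t < T \<Longrightarrow> u x t \<le> \<Psi> x t"
    and init: "\<And>x. x \<in> closure D \<Longrightarrow> u x 0 \<le> \<Psi> x 0"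
    and x: "x \<in> closure D" "0 \<le> t" "t < T"
  shows "u x t \<le> \<Psi> x t"
proof (rule ccontr)
  assume gt: "\<not> u x t \<le> \<Psi> x t"
  have "continuous_on (closure D \<times> {0..T}) (\<lambda>(x,t). u x t - \<Psi> x t)"
    using continuous_on_diff[OF u \<Psi>] by (simp add: case_prod_beta')
  moreover have "u y s - \<Psi> y s \<le> 0" if "y \<in> frontier D" "0 < s" "s < T" for y s
    using bdry[OF that] by linarith
  moreover have "u y 0 - \<Psi> y 0 \<le> 0" if "y \<in> closure D" for y
    using init[OF that] by linarith
  moreover have "u x t - \<Psi> x t > 0" using gt by linarith
  ultimately obtain c T1 x1 t1 where c: "c > 0" "T1 < T" and x1: "x1 \<in> D" "0 < t1" "t1 < T1"
    and max: "\<And>y s. y \<in> D \<Longrightarrow> 0 < s \<Longrightarrow> s < T1 \<Longrightarrow>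
      u y s - \<Psi> y s - c / (T - s) \<le> u x1 t1 - \<Psi> x1 t1 - c / (T - t1)"
    by (rule penalized_interior_maximum[OF \<open>open D\<close> \<open>bounded D\<close>, where f = "\<lambda>x t. u x t - \<Psi> x t",
        OF _ _ _ x]) blast+
  define U where "U = D \<times> {0<..<T1}"
  have "open U" unfolding U_def using \<open>open D\<close> by (simp add: open_Times)
  moreover have "U \<subseteq> D \<times> {0<..<T}" "U \<subseteq> UNIV \<times> {..<T}" using c(2) by (auto simp: U_def)
  ultimately have tfU: "test_fun (\<lambda>y s. \<Psi> y s + c / (T - s)) (\<lambda>y s. \<Psi>t y s + c / (T - s)\<^sup>2) D\<Psi> D2\<Psi> U"
    using test_fun_subset[OF tf] by (intro test_fun_add_blowup) auto
  have maxU: "\<forall>(y, s)\<in>U. u y s - (\<Psi> y s + c / (T - s)) \<le> u x1 t1 - (\<Psi> x1 t1 + c / (T - t1))"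
    using max by (auto simp: U_def algebra_simps)
  have "(x1, t1) \<in> U" "U \<subseteq> D \<times> {0<..}" using x1 by (auto simp: U_def)
  then have "\<Psi>t x1 t1 + c / (T - t1)\<^sup>2 - E (D2\<Psi> x1 t1) \<le> 0"
    using sub[unfolded viscosity_subsolution_def, rule_format, of x1 t1 U "\<lambda>y s. \<Psi> y s + c / (T - s)"
        "\<lambda>y s. \<Psi>t y s + c / (T - s)\<^sup>2" D\<Psi> D2\<Psi>, OF conjI[OF x1(1) conjI[OF x1(2)
        conjI[OF _ conjI[OF _ conjI[OF tfU maxU]]]]]]
    by blast
  moreover have "c / (T - t1)\<^sup>2 > 0" using c x1 by simp
  ultimately show False using strict[of x1 t1] x1 c by linarith
qed

section \<open>Barriers\<close>

lemma le_of_forall_pos_mult_le: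
  fixes x z t :: real
  assumes "0 \<le> t" "\<And>e. 0 < e \<Longrightarrow> x \<le> z + e * t"
  shows "x \<le> z"
proof (rule field_le_epsilon)
  fix \<epsilon> :: real assume "0 < \<epsilon>"
  then have "x \<le> z + \<epsilon> / (t + 1) * t" using assms(1) by (intro assms(2)) simp
  also have "\<dots> \<le> z + \<epsilon>" using \<open>0 < \<epsilon>\<close> assms(1) by (simp add: field_simps)
  finally show "x \<le> z + \<epsilon>" .
qed

lemma test_fun_affine_in_time:
  "open U \<Longrightarrow> test_fun (\<lambda>x t. B + e * t) (\<lambda>x t. e) (\<lambda>x t. 0) (\<lambda>x t. 0) U"
  by (rule test_funI) (auto intro!: continuous_intros derivative_eq_intros)

lemma subsolution_le_bound:
  fixes D :: "(real^'n) set"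
  assumes "open D" "bounded D" and sub: "viscosity_subsolution E D u" and E0: "E 0 \<le> 0"
    and u: "continuous_on (closure D \<times> {0..}) (\<lambda>(x,t). u x t)"
    and bdry: "\<And>x t. x \<in> frontier D \<Longrightarrow> 0 < t \<Longrightarrow> u x t \<le> B"
    and init: "\<And>x. x \<in> closure D \<Longrightarrow> u x 0 \<le> B"
    and x: "x \<in> closure D" "0 \<le> t"
  shows "u x t \<le> B"
proof (rule le_of_forall_pos_mult_le[OF \<open>0 \<le> t\<close>])
  fix e :: real assume "0 < e"
  have "open (D \<times> {0<..<t + 1})" using \<open>open D\<close> by (simp add: open_Times)
  moreover have "continuous_on (closure D \<times> {0..t + 1}) (\<lambda>(x,t). u x t)"
    using u by (rule continuous_on_subset) auto
  moreover have "continuous_on (closure D \<times> {0..t + 1}) (\<lambda>(x, s). B + e * s)"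
    by (auto simp: case_prod_beta' intro!: continuous_intros)
  ultimately show "u x t \<le> B + e * t"
    using subsolution_le_strict_supersolution[OF assms(1,2) sub, where \<Psi>t = "\<lambda>x t. e",
        OF _ test_fun_affine_in_time] \<open>0 < e\<close> E0 bdry init x
    by (simp add: add_increasing2)
qed

definition ramp :: "real \<Rightarrow> real" where "ramp z = max 0 (1 - z)"

lemma continuous_on_ramp [continuous_intros]:
  "continuous_on S f \<Longrightarrow> continuous_on S (\<lambda>x. ramp (f x))"
  unfolding ramp_def by (intro continuous_intros)

lemma ramp_power_has_real_derivative:
  assumes "n \<ge> 1"
  shows "((\<lambda>z. ramp z ^ Suc n) has_real_derivative - real (Suc n) * ramp z ^ n) (at z)"
proof -
  consider "z < 1" | "z > 1" | "z = 1" by linarith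
  then show ?thesis
  proof cases
    case 1
    have "((\<lambda>z. 1 - z) has_real_derivative -1) (at z)" by (auto intro!: derivative_eq_intros)
    from DERIV_power[OF this, of "Suc n"]
    have "((\<lambda>z. (1 - z) ^ Suc n) has_real_derivative - real (Suc n) * (1 - z) ^ n) (at z)"
      by (simp add: algebra_simps)
    then have "((\<lambda>z. ramp z ^ Suc n) has_real_derivative - real (Suc n) * (1 - z) ^ n) (at z)"
      by (rule has_field_derivative_transform_within_open[of _ _ _ "{..<1}"])
        (use 1 in \<open>auto simp: ramp_def\<close>)
    then show ?thesis using 1 by (simp add: ramp_def)
  next
    case 2
    have "((\<lambda>z. 0) has_real_derivative 0) (at z)" by simp
    then have "((\<lambda>z. ramp z ^ Suc n) has_real_derivative 0) (at z)"
      by (rule has_field_derivative_transform_within_open[of _ _ _ "{1<..}"])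
        (use 2 in \<open>auto simp: ramp_def\<close>)
    moreover have "- real (Suc n) * ramp z ^ n = 0" using 2 assms by (simp add: ramp_def)
    ultimately show ?thesis by (simp only:)
  next
    case 3
    text \<open>At the kink, \<open>0 \<le> ramp (1 + h) \<le> \<bar>h\<bar>\<close>, so the difference quotient is at most \<open>\<bar>h\<bar>\<^sup>n\<close>.\<close>
    have "((\<lambda>h. (ramp (z + h) ^ Suc n - ramp z ^ Suc n) / h) \<longlongrightarrow> 0) (at 0)"
    proof (rule Lim_null_comparison)
      show "\<forall>\<^sub>F h in at 0. norm ((ramp (z + h) ^ Suc n - ramp z ^ Suc n) / h) \<le> \<bar>h\<bar> ^ n"
      proof (rule always_eventually, rule allI)
        fix h :: real
        have r: "ramp z = 0" "0 \<le> ramp (z + h)" "ramp (z + h) \<le> \<bar>h\<bar>" using 3 by (auto simp: ramp_def)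
        then have "ramp (z + h) ^ Suc n \<le> \<bar>h\<bar> ^ Suc n" by (intro power_mono) auto
        then show "norm ((ramp (z + h) ^ Suc n - ramp z ^ Suc n) / h) \<le> \<bar>h\<bar> ^ n"
          using r by (cases "h = 0") (simp_all add: abs_mult field_simps)
      qed
      show "((\<lambda>h::real. \<bar>h\<bar> ^ n) \<longlongrightarrow> 0) (at 0)"
        using assms by (auto intro!: tendsto_eq_intros simp: power_0_left)
    qed
    moreover have "- real (Suc n) * ramp z ^ n = 0" using 3 assms by (simp add: ramp_def)
    ultimately show ?thesis by (simp only: DERIV_def)
  qed
qed

definition outer :: "real^'n \<Rightarrow> real^'n \<Rightarrow> real^'n^'n" where
  "outer a b = (\<chi> i k. a$i * b$k)"

lemma outer_mult_vec: "outer a b *v h = (b \<bullet> h) *\<^sub>R a"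
  by (simp add: outer_def vec_eq_iff matrix_vector_mult_def inner_vec_def sum_distrib_left algebra_simps)

lemma continuous_on_outer [continuous_intros]:
  "continuous_on S f \<Longrightarrow> continuous_on S g \<Longrightarrow> continuous_on S (\<lambda>x. outer (f x) (g x))"
  unfolding outer_def by (intro continuous_intros)

lemma test_fun_profile:
  fixes F :: "real^'n \<Rightarrow> real" and g :: "real^'n \<Rightarrow> real^'n" and H :: "real^'n \<Rightarrow> real^'n^'n"
  assumes U: "open U" "U \<subseteq> S \<times> UNIV"
    and G: "\<And>z. (G has_real_derivative G1 z) (at z)" "\<And>z. (G1 has_real_derivative G2 z) (at z)"
      "continuous_on UNIV G" "continuous_on UNIV G1" "continuous_on UNIV G2"
    and F: "\<And>x. x \<in> S \<Longrightarrow> (F has_derivative (\<lambda>h. g x \<bullet> h)) (at x)"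
      "\<And>x. x \<in> S \<Longrightarrow> (g has_derivative (\<lambda>h. H x *v h)) (at x)"
      "continuous_on S F" "continuous_on S g" "continuous_on S H"
  shows "test_fun (\<lambda>x t. a \<bullet> x + b + G (t - F x) + e * t) (\<lambda>x t. G1 (t - F x) + e)
           (\<lambda>x t. a - G1 (t - F x) *\<^sub>R g x)
           (\<lambda>x t. G2 (t - F x) *\<^sub>R outer (g x) (g x) - G1 (t - F x) *\<^sub>R H x) U"
proof (rule test_funI[OF U(1)])
  have fst: "continuous_on U (\<lambda>p. f (fst p))" if "continuous_on S f" for f :: "real^'n \<Rightarrow> 'b::topological_space"
    by (rule continuous_on_compose2[OF that continuous_on_fst]) (use U(2) in auto)
  have arg: "continuous_on U (\<lambda>p. snd p - F (fst p))"
    by (intro continuous_intros fst F(3))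
  have prof: "continuous_on U (\<lambda>p. K (snd p - F (fst p)))" if "continuous_on UNIV K" for K :: "real \<Rightarrow> real"
    by (rule continuous_on_compose2[OF that arg]) auto
  show "continuous_on U (\<lambda>p. a \<bullet> fst p + b + G (snd p - F (fst p)) + e * snd p)"
    "continuous_on U (\<lambda>p. G1 (snd p - F (fst p)) + e)"
    "continuous_on U (\<lambda>p. a - G1 (snd p - F (fst p)) *\<^sub>R g (fst p))"
    "continuous_on U (\<lambda>p. G2 (snd p - F (fst p)) *\<^sub>R outer (g (fst p)) (g (fst p))
       - G1 (snd p - F (fst p)) *\<^sub>R H (fst p))"
    by (intro continuous_intros prof fst G(3-5) F(4,5))+
  fix y s assume "(y, s) \<in> U"
  then have "y \<in> S" using U(2) by auto
  have "((\<lambda>r. G (r - F y)) has_real_derivative G1 (s - F y) * 1) (at s)"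
    by (rule DERIV_chain2[OF G(1)]) (auto intro!: derivative_eq_intros)
  then show "((\<lambda>r. a \<bullet> y + b + G (r - F y) + e * r) has_real_derivative G1 (s - F y) + e) (at s)"
    by (auto intro!: derivative_eq_intros)
  have inner: "((\<lambda>z. s - F z) has_derivative (\<lambda>h. - (g y \<bullet> h))) (at y)"
    using has_derivative_diff[OF has_derivative_const F(1)[OF \<open>y \<in> S\<close>]] by simp
  have "((\<lambda>z. G (s - F z)) has_derivative (\<lambda>h. G1 (s - F y) * - (g y \<bullet> h))) (at y)"
    using has_derivative_compose[OF inner G(1)[unfolded has_field_derivative_def]] by simp
  then have "((\<lambda>z. a \<bullet> z + b + G (s - F z) + e * s) has_derivative
      (\<lambda>h. a \<bullet> h + G1 (s - F y) * - (g y \<bullet> h))) (at y)"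
    by (auto intro!: derivative_eq_intros simp: inner_commute)
  then show "((\<lambda>z. a \<bullet> z + b + G (s - F z) + e * s) has_derivative
      (\<lambda>h. (a - G1 (s - F y) *\<^sub>R g y) \<bullet> h)) (at y)"
    by (simp add: inner_diff_left)
  have "((\<lambda>z. G1 (s - F z)) has_derivative (\<lambda>h. G2 (s - F y) * - (g y \<bullet> h))) (at y)"
    using has_derivative_compose[OF inner G(2)[unfolded has_field_derivative_def]] by simp
  then have "((\<lambda>z. a - G1 (s - F z) *\<^sub>R g z) has_derivative
      (\<lambda>h. 0 - (G1 (s - F y) *\<^sub>R (H y *v h) + (G2 (s - F y) * - (g y \<bullet> h)) *\<^sub>R g y))) (at y)"
    by (intro has_derivative_diff has_derivative_const has_derivative_scaleR F(2)[OF \<open>y \<in> S\<close>])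
  then show "((\<lambda>z. a - G1 (s - F z) *\<^sub>R g z) has_derivative
      (\<lambda>h. (G2 (s - F y) *\<^sub>R outer (g y) (g y) - G1 (s - F y) *\<^sub>R H y) *v h)) (at y)"
    by (simp add: algebra_simps outer_mult_vec scaleR_matrix_vector_assoc[symmetric])
qed

lemma profile_hessian_form_le:
  fixes g v :: "real^'n" and H :: "real^'n^'n"
  assumes "g \<bullet> v = 0" "G1 \<le> 0" "(H *v v) \<bullet> v \<le> -1"
  shows "((G2 *\<^sub>R outer g g - G1 *\<^sub>R H) *v v) \<bullet> v \<le> G1"
proof -
  have "((G2 *\<^sub>R outer g g - G1 *\<^sub>R H) *v v) \<bullet> v = - G1 * ((H *v v) \<bullet> v)"
    using assms(1) by (simp add: algebra_simps outer_mult_vec scaleR_matrix_vector_assoc[symmetric])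
  also have "\<dots> \<le> G1"
    using mult_nonneg_nonneg[of "- G1" "- ((H *v v) \<bullet> v) - 1"] assms(2,3) by (simp add: algebra_simps)
  finally show ?thesis .
qed

lemma ramp_nonneg: "0 \<le> ramp z"
  by (simp add: ramp_def)

lemma ramp_eq_0: "1 \<le> z \<Longrightarrow> ramp z = 0"
  by (simp add: ramp_def)

lemma ramp_cube_ge: "0 \<le> M \<Longrightarrow> z \<le> 0 \<Longrightarrow> M \<le> M * ramp z ^ 3"
  using one_le_power[of "ramp z" 3] mult_left_mono[of 1 "ramp z ^ 3" M] by (simp add: ramp_def)

lemma ramp_cube_has_real_derivative:
  "((\<lambda>z. M * ramp z ^ 3) has_real_derivative - 3 * M * ramp z ^ 2) (at z)"
  using DERIV_cmult[OF ramp_power_has_real_derivative[of 2], of M]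
  by (simp add: numeral_3_eq_3 numeral_2_eq_2 algebra_simps)

lemma ramp_square_has_real_derivative:
  "((\<lambda>z. - 3 * M * ramp z ^ 2) has_real_derivative 6 * M * ramp z) (at z)"
  using DERIV_cmult[OF ramp_power_has_real_derivative[of 1], of "- 3 * M"]
  by (simp add: numeral_2_eq_2 algebra_simps)

lemma subsolution_le_barrier:
  fixes D :: "(real^'n) set" and F :: "real^'n \<Rightarrow> real" and g :: "real^'n \<Rightarrow> real^'n"
    and H :: "real^'n \<Rightarrow> real^'n^'n"
  assumes "open D" "bounded D"
    and E: "\<And>A a \<mu>. (\<And>v. a \<bullet> v = 0 \<Longrightarrow> norm v = 1 \<Longrightarrow> (A *v v) \<bullet> v \<le> \<mu>) \<Longrightarrow> E A \<le> \<mu>"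
    and sub: "viscosity_subsolution E D u"
    and u: "continuous_on (closure D \<times> {0..T}) (\<lambda>(x,t). u x t)"
    and S: "open S" "closure D \<subseteq> S"
    and F: "\<And>x. x \<in> S \<Longrightarrow> (F has_derivative (\<lambda>h. g x \<bullet> h)) (at x)"
      "\<And>x. x \<in> S \<Longrightarrow> (g has_derivative (\<lambda>h. H x *v h)) (at x)"
      "continuous_on S F" "continuous_on S g" "continuous_on S H"
    and hess: "\<And>x v. x \<in> D \<Longrightarrow> g x \<bullet> v = 0 \<Longrightarrow> norm v = 1 \<Longrightarrow> (H x *v v) \<bullet> v \<le> -1"
    and M: "0 \<le> M" "\<And>x s. x \<in> closure D \<Longrightarrow> 0 \<le> s \<Longrightarrow> s < T \<Longrightarrow> u x s \<le> a \<bullet> x + b + M"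
    and F0: "\<And>x. x \<in> closure D \<Longrightarrow> 0 \<le> F x"
    and bdry: "\<And>x s. x \<in> frontier D \<Longrightarrow> 0 < s \<Longrightarrow> s < T \<Longrightarrow> T \<le> F x \<or> u x s \<le> a \<bullet> x + b"
    and "0 < e" and x: "x \<in> closure D" "0 \<le> t" "t < T"
  shows "u x t \<le> a \<bullet> x + b + M * ramp (t - F x) ^ 3 + e * t"
proof -
  define G1 where "G1 = (\<lambda>z. - 3 * M * ramp z ^ 2)"
  define G2 where "G2 = (\<lambda>z. 6 * M * ramp z)"
  have G: "((\<lambda>z. M * ramp z ^ 3) has_real_derivative G1 z) (at z)"
    "(G1 has_real_derivative G2 z) (at z)" for z
    unfolding G1_def G2_def by (rule ramp_cube_has_real_derivative ramp_square_has_real_derivative)+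
  have cont: "continuous_on UNIV (\<lambda>z. M * ramp z ^ 3)" "continuous_on UNIV G1" "continuous_on UNIV G2"
    unfolding G1_def G2_def by (intro continuous_intros)+
  have "D \<subseteq> S" using S(2) closure_subset by blast
  have tf: "test_fun (\<lambda>x t. a \<bullet> x + b + M * ramp (t - F x) ^ 3 + e * t) (\<lambda>x t. G1 (t - F x) + e)
      (\<lambda>x t. a - G1 (t - F x) *\<^sub>R g x)
      (\<lambda>x t. G2 (t - F x) *\<^sub>R outer (g x) (g x) - G1 (t - F x) *\<^sub>R H x) (D \<times> {0<..<T})"
    using \<open>open D\<close> \<open>D \<subseteq> S\<close>
    by (intro test_fun_profile[where G = "\<lambda>z. M * ramp z ^ 3", OF _ _ G cont F]) (auto simp: open_Times)
  have "continuous_on (closure D \<times> {0..T}) (\<lambda>(x, t). a \<bullet> x + b + M * ramp (t - F x) ^ 3 + e * t)"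
    unfolding case_prod_beta'
    by (intro continuous_intros continuous_on_compose2[OF continuous_on_subset[OF F(3) S(2)]]) auto
  moreover have "G1 (s - F y) + e - E (G2 (s - F y) *\<^sub>R outer (g y) (g y) - G1 (s - F y) *\<^sub>R H y) > 0"
    if "y \<in> D" for y s
  proof -
    have "G1 (s - F y) \<le> 0" using M(1) by (simp add: G1_def)
    then have "E (G2 (s - F y) *\<^sub>R outer (g y) (g y) - G1 (s - F y) *\<^sub>R H y) \<le> G1 (s - F y)"
      using profile_hessian_form_le hess[OF that] by (intro E[of "g y"]) blast
    then show ?thesis using \<open>0 < e\<close> by linarith
  qed
  moreover have "u y s \<le> a \<bullet> y + b + M * ramp (s - F y) ^ 3 + e * s"
    if "y \<in> frontier D" "0 < s" "s < T" for y s
  proof -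
    have "y \<in> closure D" using that(1) by (simp add: frontier_def)
    have "0 \<le> e * s" using \<open>0 < e\<close> that(2) by simp
    from bdry[OF that] show ?thesis
    proof
      assume "T \<le> F y"
      then have "M \<le> M * ramp (s - F y) ^ 3" using ramp_cube_ge M(1) \<open>s < T\<close> by simp
      moreover have "u y s \<le> a \<bullet> y + b + M" using M(2)[OF \<open>y \<in> closure D\<close>] that by simp
      ultimately show ?thesis using \<open>0 \<le> e * s\<close> by linarith
    next
      assume "u y s \<le> a \<bullet> y + b"
      moreover have "0 \<le> M * ramp (s - F y) ^ 3" using M(1) ramp_nonneg by simp
      ultimately show ?thesis using \<open>0 \<le> e * s\<close> by linarith
    qed
  qed
  moreover have "u y 0 \<le> a \<bullet> y + b + M * ramp (0 - F y) ^ 3 + e * 0" if "y \<in> closure D" for y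
  proof -
    have "u y 0 \<le> a \<bullet> y + b + M" using M(2)[OF that, of 0] x by simp
    then show ?thesis using ramp_cube_ge[OF M(1), of "0 - F y"] F0[OF that] by simp
  qed
  ultimately show ?thesis
    by (rule subsolution_le_strict_supersolution[OF \<open>open D\<close> \<open>bounded D\<close> sub u tf]) (use x in auto)
qed

definition potential :: "real^'n \<Rightarrow> real \<Rightarrow> real^'n \<Rightarrow> real \<Rightarrow> real \<Rightarrow> real^'n \<Rightarrow> real" where
  "potential w \<theta> y C Q x = C / (x \<bullet> w - \<theta>) - (x - y) \<bullet> (x - y) + Q"

definition potential_grad :: "real^'n \<Rightarrow> real \<Rightarrow> real^'n \<Rightarrow> real \<Rightarrow> real^'n \<Rightarrow> real^'n" where
  "potential_grad w \<theta> y C x = (- (C / (x \<bullet> w - \<theta>)\<^sup>2)) *\<^sub>R w - 2 *\<^sub>R (x - y)"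

definition potential_hess :: "real^'n \<Rightarrow> real \<Rightarrow> real \<Rightarrow> real^'n \<Rightarrow> real^'n^'n" where
  "potential_hess w \<theta> C x = (2 * C / (x \<bullet> w - \<theta>) ^ 3) *\<^sub>R outer w w - 2 *\<^sub>R mat 1"

lemma potential_hess_mult_vec:
  "potential_hess w \<theta> C x *v h = (2 * C / (x \<bullet> w - \<theta>) ^ 3 * (w \<bullet> h)) *\<^sub>R w - 2 *\<^sub>R h"
  unfolding potential_hess_def
  by (simp add: algebra_simps outer_mult_vec scaleR_matrix_vector_assoc[symmetric])

lemma has_derivative_inner_minus_const:
  "((\<lambda>x. x \<bullet> w - \<theta>) has_derivative (\<lambda>h. w \<bullet> h)) (at x)"
  by (rule has_derivative_eq_rhs, (intro derivative_eq_intros)+, auto simp: inner_commute)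

lemma potential_has_derivative:
  assumes "\<theta> < x \<bullet> w"
  shows "(potential w \<theta> y C Q has_derivative (\<lambda>h. potential_grad w \<theta> y C x \<bullet> h)) (at x)"
proof -
  have "x \<bullet> w - \<theta> \<noteq> 0" using assms by simp
  then have "((\<lambda>s. C / s) has_real_derivative - (C / (x \<bullet> w - \<theta>)\<^sup>2)) (at (x \<bullet> w - \<theta>))"
    by (auto intro!: derivative_eq_intros simp: power2_eq_square field_simps)
  from has_derivative_compose[OF has_derivative_inner_minus_const this[unfolded has_field_derivative_def]]
  have "((\<lambda>x. C / (x \<bullet> w - \<theta>)) has_derivative (\<lambda>h. - (C / (x \<bullet> w - \<theta>)\<^sup>2) * (w \<bullet> h))) (at x)"
    by simp
  moreover have "((\<lambda>x. (x - y) \<bullet> (x - y)) has_derivative (\<lambda>h. (2 *\<^sub>R (x - y)) \<bullet> h)) (at x)"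
    by (rule has_derivative_eq_rhs, (intro derivative_eq_intros)+, auto simp: inner_commute algebra_simps)
  ultimately have "((\<lambda>x. C / (x \<bullet> w - \<theta>) - (x - y) \<bullet> (x - y) + Q) has_derivative
      (\<lambda>h. - (C / (x \<bullet> w - \<theta>)\<^sup>2) * (w \<bullet> h) - (2 *\<^sub>R (x - y)) \<bullet> h)) (at x)"
    by (intro has_derivative_add_const has_derivative_diff)
  then show ?thesis
    unfolding potential_def[abs_def] potential_grad_def by (simp add: inner_diff_left)
qed

lemma potential_grad_has_derivative:
  assumes "\<theta> < x \<bullet> w"
  shows "(potential_grad w \<theta> y C has_derivative (\<lambda>h. potential_hess w \<theta> C x *v h)) (at x)"
proof -
  have "((\<lambda>s. - (C / s\<^sup>2)) has_real_derivative 2 * C / s ^ 3) (at s)" if "s \<noteq> 0" for s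
    using that by (auto intro!: derivative_eq_intros simp: power2_eq_square power3_eq_cube field_simps)
  moreover have "x \<bullet> w - \<theta> \<noteq> 0" using assms by simp
  ultimately have "((\<lambda>s. - (C / s\<^sup>2)) has_real_derivative 2 * C / (x \<bullet> w - \<theta>) ^ 3) (at (x \<bullet> w - \<theta>))"
    by blast
  from has_derivative_compose[OF has_derivative_inner_minus_const this[unfolded has_field_derivative_def]]
  have "((\<lambda>x. - (C / (x \<bullet> w - \<theta>)\<^sup>2)) has_derivative (\<lambda>h. 2 * C / (x \<bullet> w - \<theta>) ^ 3 * (w \<bullet> h))) (at x)"
    by simp
  moreover have "((\<lambda>x. 2 *\<^sub>R (x - y)) has_derivative (\<lambda>h. 2 *\<^sub>R h)) (at x)"
    by (rule has_derivative_eq_rhs, (intro derivative_eq_intros)+, auto)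
  ultimately have "((\<lambda>x. (- (C / (x \<bullet> w - \<theta>)\<^sup>2)) *\<^sub>R w - 2 *\<^sub>R (x - y)) has_derivative
      (\<lambda>h. (2 * C / (x \<bullet> w - \<theta>) ^ 3 * (w \<bullet> h)) *\<^sub>R w - 2 *\<^sub>R h)) (at x)"
    by (intro has_derivative_diff has_derivative_scaleR_left)
  then show ?thesis
    unfolding potential_grad_def[abs_def] potential_hess_mult_vec .
qed

lemma continuous_on_potential:
  "continuous_on {x. \<theta> < x \<bullet> w} (potential w \<theta> y C Q)"
  "continuous_on {x. \<theta> < x \<bullet> w} (potential_grad w \<theta> y C)"
  "continuous_on {x. \<theta> < x \<bullet> w} (potential_hess w \<theta> C)"
  unfolding potential_def[abs_def] potential_grad_def[abs_def] potential_hess_def[abs_def]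
  by (intro continuous_intros, auto)+

text \<open>On the hyperplane orthogonal to the gradient, \<open>(C/d\<^sup>2)(w\<cdot>v) = -2(x - y)\<cdot>v\<close>, so the
  convex term \<open>2C(w\<cdot>v)\<^sup>2/d\<^sup>3 = 8((x - y)\<cdot>v)\<^sup>2 d/C\<close> is beaten by \<open>-2|v|\<^sup>2\<close> once \<open>C\<close> is large.\<close>
lemma potential_hess_form_le:
  fixes x y w v :: "real^'n"
  assumes grad: "potential_grad w \<theta> y C x \<bullet> v = 0" and "norm v = 1" "0 < C"
    and d: "0 < x \<bullet> w - \<theta>" "x \<bullet> w - \<theta> \<le> Ld" and "norm (x - y) \<le> L"
    and CL: "8 * L\<^sup>2 * Ld \<le> C"
  shows "(potential_hess w \<theta> C x *v v) \<bullet> v \<le> -1"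
proof -
  define d where "d = x \<bullet> w - \<theta>"
  define p where "p = w \<bullet> v"
  define q where "q = (x - y) \<bullet> v"
  have "0 < d" "d \<le> Ld" using d by (simp_all add: d_def)
  have "\<bar>q\<bar> \<le> L"
    unfolding q_def using Cauchy_Schwarz_ineq2[of "x - y" v] assms(2,6) by simp
  then have q2: "q\<^sup>2 \<le> L\<^sup>2" using power_mono[of "\<bar>q\<bar>" L 2] by simp
  have "- (C / d\<^sup>2) * p - 2 * q = 0"
    using grad unfolding potential_grad_def d_def p_def q_def by (simp add: inner_diff_left)
  then have Cp: "C * p = - 2 * q * d\<^sup>2" using \<open>0 < d\<close> by (simp add: field_simps)
  have "2 * C / d ^ 3 * p\<^sup>2 = 2 * (C * p)\<^sup>2 / (C * d ^ 3)"
    using \<open>0 < C\<close> \<open>0 < d\<close> by (simp add: field_simps power2_eq_square)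
  also have "\<dots> = 8 * q\<^sup>2 * d / C"
    unfolding Cp using \<open>0 < C\<close> \<open>0 < d\<close> by (simp add: field_simps power2_eq_square power3_eq_cube)
  also have "\<dots> \<le> 8 * L\<^sup>2 * Ld / C"
    using q2 \<open>0 < C\<close> \<open>0 < d\<close> \<open>d \<le> Ld\<close> by (intro divide_right_mono mult_mono) auto
  also have "\<dots> \<le> 1" using CL \<open>0 < C\<close> by simp
  finally have "2 * C / d ^ 3 * p\<^sup>2 \<le> 1" .
  moreover have "v \<bullet> v = 1" using assms(2) by (simp add: power2_norm_eq_inner[symmetric])
  then have "(potential_hess w \<theta> C x *v v) \<bullet> v = 2 * C / d ^ 3 * p\<^sup>2 - 2"
    by (simp add: potential_hess_mult_vec d_def p_def inner_diff_left power2_eq_square)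
  ultimately show ?thesis by linarith
qed

lemma closure_inter_halfspace_subset:
  "closure (\<Omega> \<inter> {x. c < w \<bullet> x}) \<subseteq> closure \<Omega> \<inter> {x. c \<le> w \<bullet> x}"
proof (rule Int_greatest)
  show "closure (\<Omega> \<inter> {x. c < w \<bullet> x}) \<subseteq> closure \<Omega>" by (rule closure_mono) blast
  show "closure (\<Omega> \<inter> {x. c < w \<bullet> x}) \<subseteq> {x. c \<le> w \<bullet> x}"
    by (rule closure_minimal) (auto intro: closed_halfspace_ge)
qed

lemma frontier_inter_halfspace:
  fixes \<Omega> :: "(real^'n) set"
  assumes "open \<Omega>" "x \<in> frontier (\<Omega> \<inter> {x. c < w \<bullet> x})"
  shows "(x \<in> \<Omega> \<and> w \<bullet> x = c) \<or> (x \<in> frontier \<Omega> \<and> c \<le> w \<bullet> x)"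
proof -
  have op: "open (\<Omega> \<inter> {x. c < w \<bullet> x})" using assms(1) open_halfspace_gt by blast
  have x: "x \<in> closure (\<Omega> \<inter> {x. c < w \<bullet> x})" "x \<notin> \<Omega> \<inter> {x. c < w \<bullet> x}"
    using assms(2) unfolding frontier_def interior_open[OF op] by auto
  then have "c \<le> w \<bullet> x" "x \<in> closure \<Omega>" using closure_inter_halfspace_subset by blast+
  show ?thesis
  proof (cases "x \<in> \<Omega>")
    case True
    then show ?thesis using x(2) \<open>c \<le> w \<bullet> x\<close> by auto
  next
    case False
    then show ?thesis
      using \<open>x \<in> closure \<Omega>\<close> \<open>c \<le> w \<bullet> x\<close> assms(1) by (simp add: frontier_def interior_open)
  qed
qed

lemma subsolution_le_affine_at:
  fixes \<Omega> :: "(real^'n) set"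
  assumes "open \<Omega>" "bounded \<Omega>"
    and E: "\<And>A a \<mu>. (\<And>v. a \<bullet> v = 0 \<Longrightarrow> norm v = 1 \<Longrightarrow> (A *v v) \<bullet> v \<le> \<mu>) \<Longrightarrow> E A \<le> \<mu>"
    and sub: "viscosity_subsolution E \<Omega> u"
    and u: "continuous_on (closure \<Omega> \<times> {0..}) (\<lambda>(x,t). u x t)"
    and M: "0 \<le> M" "\<And>x t. x \<in> closure \<Omega> \<Longrightarrow> 0 \<le> t \<Longrightarrow> u x t \<le> a \<bullet> x + b + M"
    and bdry: "\<And>x t. x \<in> frontier \<Omega> \<Longrightarrow> \<theta> < x \<bullet> w \<Longrightarrow> 0 < t \<Longrightarrow> u x t \<le> a \<bullet> x + b"
    and y: "y \<in> \<Omega>" "\<theta> \<le> th" "th < y \<bullet> w"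
    and "0 < C" and Q: "\<And>x. x \<in> closure \<Omega> \<Longrightarrow> (x - y) \<bullet> (x - y) \<le> Q"
    and hess: "\<And>x v. x \<in> closure \<Omega> \<Longrightarrow> th < x \<bullet> w \<Longrightarrow> potential_grad w th y C x \<bullet> v = 0 \<Longrightarrow>
      norm v = 1 \<Longrightarrow> (potential_hess w th C x *v v) \<bullet> v \<le> -1"
    and t: "potential w th y C Q y + 1 \<le> t" and "0 < e"
  shows "u y t \<le> a \<bullet> y + b + e * t"
proof -
  define F where "F = potential w th y C Q"
  define T where "T = t + 1"
  define th2 where "th2 = th + min (C / T) ((y \<bullet> w - th) / 2)"
  define D where "D = \<Omega> \<inter> {x. th2 < w \<bullet> x}"
  have F_ge: "C / (x \<bullet> w - th) \<le> F x" if "x \<in> closure \<Omega>" for x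
    using Q[OF that] by (simp add: F_def potential_def)
  have "y \<in> closure \<Omega>" using y(1) closure_subset by blast
  moreover have "0 < C / (y \<bullet> w - th)" using \<open>0 < C\<close> y(3) by simp
  ultimately have "0 < T" using F_ge[of y] t unfolding T_def F_def[symmetric] by linarith
  then have th2: "th < th2" "th2 < y \<bullet> w" "T \<le> C / (th2 - th)"
    using \<open>0 < C\<close> y(3) by (auto simp: th2_def field_simps min_def)
  have clD: "closure D \<subseteq> closure \<Omega> \<inter> {x. th2 \<le> w \<bullet> x}"
    unfolding D_def by (rule closure_inter_halfspace_subset)
  then have S: "closure D \<subseteq> {x. th < x \<bullet> w}" using th2(1) by (auto simp: inner_commute)
  have F_ge0: "0 \<le> F x" if "x \<in> closure D" for x
  proof -
    have "x \<in> closure \<Omega>" "th < x \<bullet> w" using that clD S by auto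
    then show ?thesis using F_ge[of x] \<open>0 < C\<close> by (smt (verit) divide_pos_pos)
  qed
  have cut: "T \<le> F x \<or> u x s \<le> a \<bullet> x + b" if "x \<in> frontier D" "0 < s" for x s
    using frontier_inter_halfspace[OF \<open>open \<Omega>\<close> that(1)[unfolded D_def]]
  proof
    assume "x \<in> \<Omega> \<and> w \<bullet> x = th2"
    then have "C / (th2 - th) \<le> F x" using F_ge[of x] closure_subset by (force simp: inner_commute)
    then show ?thesis using th2(3) by simp
  next
    assume "x \<in> frontier \<Omega> \<and> th2 \<le> w \<bullet> x"
    then show ?thesis using bdry[of x s] that(2) th2(1) y(2) by (simp add: inner_commute)
  qed
  have hessD: "(potential_hess w th C x *v v) \<bullet> v \<le> -1"
    if "x \<in> D" "potential_grad w th y C x \<bullet> v = 0" "norm v = 1" for x v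
    using hess[of x v] that S closure_subset[of D] closure_mono[of D \<Omega>] by (auto simp: D_def)
  have D: "open D" "bounded D" using assms(1,2) by (auto simp: D_def open_halfspace_gt bounded_Int)
  have subD: "viscosity_subsolution E D u"
    using sub by (rule viscosity_subsolution_subset) (simp add: D_def)
  have uD: "continuous_on (closure D \<times> {0..T}) (\<lambda>(x,t). u x t)"
    using u by (rule continuous_on_subset) (use clD in auto)
  have oS: "open {x. th < x \<bullet> w}" using open_halfspace_gt[of th w] by (simp add: inner_commute)
  have MD: "u x s \<le> a \<bullet> x + b + M" if "x \<in> closure D" "0 \<le> s" "s < T" for x s
    using M(2)[of x s] that clD by auto
  have yD: "y \<in> closure D" using y(1) th2(2) closure_subset by (force simp: D_def inner_commute)
  have tT: "0 \<le> t" "t < T" using \<open>0 < T\<close> t F_ge0[OF yD] by (simp_all add: T_def F_def)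
  have Fd: "(F has_derivative (\<lambda>h. potential_grad w th y C x \<bullet> h)) (at x)"
    and gd: "(potential_grad w th y C has_derivative (\<lambda>h. potential_hess w th C x *v h)) (at x)"
    if "x \<in> {x. th < x \<bullet> w}" for x
    using that unfolding F_def by (simp_all add: potential_has_derivative potential_grad_has_derivative)
  have Fc: "continuous_on {x. th < x \<bullet> w} F" unfolding F_def by (rule continuous_on_potential)
  have "u y t \<le> a \<bullet> y + b + M * ramp (t - F y) ^ 3 + e * t"
    by (rule subsolution_le_barrier[where S = "{x. th < x \<bullet> w}" and g = "potential_grad w th y C"
          and H = "potential_hess w th C" and M = M and D = D])
      (rule D subD uD oS S Fd gd Fc continuous_on_potential(2,3) hessD M(1) MD F_ge0 cut \<open>0 < e\<close>
        yD tT E | assumption)+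
  moreover have "ramp (t - F y) = 0" using t by (intro ramp_eq_0) (simp add: F_def)
  ultimately show ?thesis by simp
qed

lemma subsolution_eventually_le_affine:
  fixes \<Omega> :: "(real^'n) set"
  assumes "open \<Omega>" "bounded \<Omega>"
    and E: "\<And>A a \<mu>. (\<And>v. a \<bullet> v = 0 \<Longrightarrow> norm v = 1 \<Longrightarrow> (A *v v) \<bullet> v \<le> \<mu>) \<Longrightarrow> E A \<le> \<mu>"
    and sub: "viscosity_subsolution E \<Omega> u"
    and u: "continuous_on (closure \<Omega> \<times> {0..}) (\<lambda>(x,t). u x t)"
    and M: "\<And>x t. x \<in> closure \<Omega> \<Longrightarrow> 0 \<le> t \<Longrightarrow> u x t \<le> a \<bullet> x + b + M"
    and bdry: "\<And>x t. x \<in> frontier \<Omega> \<Longrightarrow> \<theta> < x \<bullet> w \<Longrightarrow> 0 < t \<Longrightarrow> u x t \<le> a \<bullet> x + b"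
    and "norm w = 1" "y \<in> \<Omega>" "\<theta> < y \<bullet> w"
  shows "\<exists>ty. \<forall>t>ty. u y t \<le> a \<bullet> y + b"
proof -
  obtain R where R: "\<And>x. x \<in> closure \<Omega> \<Longrightarrow> norm x \<le> R"
    using bounded_closure[OF assms(2)] unfolding bounded_iff by blast
  define th where "th = (\<theta> + y \<bullet> w) / 2"
  define L where "L = 2 * R"
  define Ld where "Ld = R + \<bar>th\<bar> + 1"
  define C where "C = 8 * L\<^sup>2 * Ld + 1"
  have th: "\<theta> \<le> th" "th < y \<bullet> w" using \<open>\<theta> < y \<bullet> w\<close> by (simp_all add: th_def)
  have "y \<in> closure \<Omega>" using \<open>y \<in> \<Omega>\<close> closure_subset by blast
  then have "0 \<le> R" using R[of y] norm_ge_zero order_trans by blast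
  then have "0 < Ld" by (simp add: Ld_def add_nonneg_pos)
  then have "0 < C" unfolding C_def by (simp add: add_nonneg_pos)
  have L: "norm (x - y) \<le> L" if "x \<in> closure \<Omega>" for x
    using R[OF that] R[OF \<open>y \<in> closure \<Omega>\<close>] norm_triangle_ineq4[of x y] by (simp add: L_def)
  have Q: "(x - y) \<bullet> (x - y) \<le> L\<^sup>2" if "x \<in> closure \<Omega>" for x
    using power_mono[OF L[OF that], of 2] by (simp add: power2_norm_eq_inner)
  have hess: "(potential_hess w th C x *v v) \<bullet> v \<le> -1"
    if "x \<in> closure \<Omega>" "th < x \<bullet> w" "potential_grad w th y C x \<bullet> v = 0" "norm v = 1" for x v
  proof (rule potential_hess_form_le[OF that(3,4) \<open>0 < C\<close> _ _ L[OF that(1)]])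
    show "0 < x \<bullet> w - th" using that(2) by simp
    show "x \<bullet> w - th \<le> Ld"
      using Cauchy_Schwarz_ineq2[of x w] R[OF that(1)] \<open>norm w = 1\<close> by (simp add: Ld_def)
    show "8 * L\<^sup>2 * Ld \<le> C" by (simp add: C_def)
  qed
  have "u y t \<le> a \<bullet> y + b" if "potential w th y C (L\<^sup>2) y + 1 < t" for t
  proof (rule le_of_forall_pos_mult_le)
    have "0 < potential w th y C (L\<^sup>2) y"
      using \<open>0 < C\<close> th(2) by (simp add: potential_def add_pos_nonneg)
    then show "0 \<le> t" using that by linarith
    fix e :: real assume "0 < e"
    have "u x s \<le> a \<bullet> x + b + max 0 M" if "x \<in> closure \<Omega>" "0 \<le> s" for x s
      using M[OF that] by simp
    then show "u y t \<le> a \<bullet> y + b + e * t"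
      using that \<open>0 < e\<close>
      by (intro subsolution_le_affine_at[where M = "max 0 M", OF assms(1,2) E sub u _ _ bdry \<open>y \<in> \<Omega>\<close> th \<open>0 < C\<close> Q hess])
        auto
  qed
  then show ?thesis by blast
qed

lemma minus_eig_minus_le_if_hyperplane:
  fixes A :: "real^'n^'n"
  assumes "2 \<le> j" "j \<le> CARD('n)"
    and "\<And>v. a \<bullet> v = 0 \<Longrightarrow> norm v = 1 \<Longrightarrow> (A *v v) \<bullet> v \<le> \<mu>"
  shows "- eig j (- A) \<le> \<mu>"
proof -
  have "eig j (- A) \<ge> - \<mu>"
    using assms by (intro eig_ge_if_hyperplane[of j a]) (auto simp: matrix_vector_mult_uminus)
  then show ?thesis by simp
qed

lemma visc_solution_bounded:
  fixes \<Omega> :: "(real^'n) set"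
  assumes "open \<Omega>" "bounded \<Omega>" "1 \<le> j" "j \<le> CARD('n)"
    and u0: "continuous_on (closure \<Omega>) u0" and g: "continuous_on (frontier \<Omega>) g"
    and sol: "visc_solution j \<Omega> g u0 u"
  obtains B where "\<And>x t. x \<in> closure \<Omega> \<Longrightarrow> 0 \<le> t \<Longrightarrow> \<bar>u x t\<bar> \<le> B"
proof -
  obtain B1 where B1: "\<And>x. x \<in> closure \<Omega> \<Longrightarrow> \<bar>u0 x\<bar> \<le> B1"
    using continuous_on_compact_bound[OF compact_closure[THEN iffD2, OF assms(2)] u0] by auto
  obtain B2 where B2: "\<And>x. x \<in> frontier \<Omega> \<Longrightarrow> \<bar>g x\<bar> \<le> B2"
    using continuous_on_compact_bound[OF compact_frontier_bounded[OF assms(2)] g] by auto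
  have u: "continuous_on (closure \<Omega> \<times> {0..}) (\<lambda>(x,t). u x t)" "visc_sub j \<Omega> u" "visc_super j \<Omega> u"
    and bdry: "\<And>x t. x \<in> frontier \<Omega> \<Longrightarrow> 0 < t \<Longrightarrow> u x t = g x"
    and init: "\<And>x. x \<in> closure \<Omega> \<Longrightarrow> u x 0 = u0 x"
    using sol unfolding visc_solution_def by auto
  have bdry_le: "\<bar>u x t\<bar> \<le> max B1 B2" if "x \<in> frontier \<Omega>" "0 < t" for x t
    using bdry[OF that] B2[OF that(1)] by simp
  have init_le: "\<bar>u x 0\<bar> \<le> max B1 B2" if "x \<in> closure \<Omega>" for x
    using init[OF that] B1[OF that] by simp
  have "u x t \<le> max B1 B2" if "x \<in> closure \<Omega>" "0 \<le> t" for x t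
  proof (rule subsolution_le_bound[OF assms(1,2) _ _ u(1) _ _ that])
    show "viscosity_subsolution (eig j) \<Omega> u" using u(2) by (simp add: visc_sub_iff_viscosity_subsolution)
    show "eig j (0 :: real^'n^'n) \<le> 0" using eig_zero[OF assms(3,4)] by simp
  qed (use bdry_le init_le abs_le_iff in blast)+
  moreover have "- u x t \<le> max B1 B2" if "x \<in> closure \<Omega>" "0 \<le> t" for x t
  proof (rule subsolution_le_bound[OF assms(1,2) visc_super_imp_viscosity_subsolution_uminus[OF u(3)]
        _ _ _ _ that])
    show "continuous_on (closure \<Omega> \<times> {0..}) (\<lambda>(x,t). - u x t)"
      using continuous_on_minus[OF u(1)] by (simp add: case_prod_beta')
    show "- eig j (- (0 :: real^'n^'n)) \<le> 0" using eig_zero[OF assms(3,4)] by simp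
  qed (use bdry_le init_le abs_le_iff in blast)+
  ultimately show ?thesis using that[of "max B1 B2"] by (simp add: abs_le_iff)
qed

lemma visc_solution_eventually_affine:
  fixes \<Omega> :: "(real^'n) set"
  assumes "open \<Omega>" "bounded \<Omega>" "1 \<le> j" "j \<le> CARD('n)"
    and sol: "visc_solution j \<Omega> g u0 u"
    and M: "\<And>x t. x \<in> closure \<Omega> \<Longrightarrow> 0 \<le> t \<Longrightarrow> \<bar>u x t - (a \<bullet> x + b)\<bar> \<le> M"
    and g: "\<And>x. x \<in> frontier \<Omega> \<Longrightarrow> \<theta> < x \<bullet> w \<Longrightarrow> g x = a \<bullet> x + b"
    and "norm w = 1" "y \<in> \<Omega>" "\<theta> < y \<bullet> w"
  shows "j < CARD('n) \<Longrightarrow> \<exists>ty. \<forall>t>ty. u y t \<le> a \<bullet> y + b"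
    and "2 \<le> j \<Longrightarrow> \<exists>ty. \<forall>t>ty. a \<bullet> y + b \<le> u y t"
proof -
  have u: "continuous_on (closure \<Omega> \<times> {0..}) (\<lambda>(x,t). u x t)" "visc_sub j \<Omega> u" "visc_super j \<Omega> u"
    and bdry: "\<And>x t. x \<in> frontier \<Omega> \<Longrightarrow> \<theta> < x \<bullet> w \<Longrightarrow> 0 < t \<Longrightarrow> u x t = a \<bullet> x + b"
    using sol g unfolding visc_solution_def by auto
  show "\<exists>ty. \<forall>t>ty. u y t \<le> a \<bullet> y + b" if "j < CARD('n)"
  proof (rule subsolution_eventually_le_affine[where E = "eig j" and M = M, OF assms(1,2) _ _ u(1)
        _ _ assms(8-10)])
    show "eig j A \<le> \<mu>" if "\<And>v. c \<bullet> v = 0 \<Longrightarrow> norm v = 1 \<Longrightarrow> (A *v v) \<bullet> v \<le> \<mu>"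
      for A :: "real^'n^'n" and c \<mu>
      by (rule eig_le_if_hyperplane[OF assms(3) \<open>j < CARD('n)\<close> that])
    show "viscosity_subsolution (eig j) \<Omega> u" using u(2) by (simp add: visc_sub_iff_viscosity_subsolution)
    show "u x t \<le> a \<bullet> x + b + M" if "x \<in> closure \<Omega>" "0 \<le> t" for x t
      using M[OF that] by (simp add: abs_le_iff)
    show "u x t \<le> a \<bullet> x + b" if "x \<in> frontier \<Omega>" "\<theta> < x \<bullet> w" "0 < t" for x t
      using bdry[OF that] by simp
  qed
  have "\<exists>ty. \<forall>t>ty. - u y t \<le> (- a) \<bullet> y + - b" if "2 \<le> j"
  proof (rule subsolution_eventually_le_affine[where E = "\<lambda>A. - eig j (- A)" and M = M,
        OF assms(1,2) _ visc_super_imp_viscosity_subsolution_uminus[OF u(3)] _ _ _ assms(8-10)])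
    show "- eig j (- A) \<le> \<mu>" if "\<And>v. c \<bullet> v = 0 \<Longrightarrow> norm v = 1 \<Longrightarrow> (A *v v) \<bullet> v \<le> \<mu>"
      for A :: "real^'n^'n" and c \<mu>
      by (rule minus_eig_minus_le_if_hyperplane[OF \<open>2 \<le> j\<close> assms(4) that])
    show "continuous_on (closure \<Omega> \<times> {0..}) (\<lambda>(x,t). - u x t)"
      using continuous_on_minus[OF u(1)] by (simp add: case_prod_beta')
    show "- u x t \<le> (- a) \<bullet> x + - b + M" if "x \<in> closure \<Omega>" "0 \<le> t" for x t
      using M[OF that] by (simp add: abs_le_iff)
    show "- u x t \<le> (- a) \<bullet> x + - b" if "x \<in> frontier \<Omega>" "\<theta> < x \<bullet> w" "0 < t" for x t
      using bdry[OF that] by simp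
  qed
  then show "\<exists>ty. \<forall>t>ty. a \<bullet> y + b \<le> u y t" if "2 \<le> j" using that by force
qed

theorem mainTheorem13:
  fixes \<Omega> :: "(real^'n) set" and j :: nat and u0 g \<pi> :: "real^'n \<Rightarrow> real"
    and u :: "real^'n \<Rightarrow> real \<Rightarrow> real" and w :: "real^'n" and \<theta> :: real
  assumes "open \<Omega>" and "connected \<Omega>" and "\<Omega> \<noteq> {}" and "bounded \<Omega>"
    and "1 \<le> j" and "j \<le> CARD('n)"
    and "cond_F j \<Omega>" and "cond_F (CARD('n) - j + 1) \<Omega>"
    and "continuous_on (closure \<Omega>) u0"
    and "continuous_on UNIV g"
    and "\<forall>x\<in>frontier \<Omega>. u0 x = g x"
    and "\<exists>a b. \<forall>x. \<pi> x = a \<bullet> x + b"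
    and "norm w = 1"
    and "\<forall>x. x \<notin> \<Omega> \<and> x \<bullet> w > \<theta> \<longrightarrow> g x = \<pi> x"
    and "visc_solution j \<Omega> g u0 u"
  shows "\<forall>y\<in>\<Omega>. y \<bullet> w > \<theta> \<longrightarrow> (\<exists>ty>0.
           (j \<le> CARD('n) - 1 \<longrightarrow> (\<forall>t>ty. u y t \<le> \<pi> y)) \<and>
           (2 \<le> j \<longrightarrow> (\<forall>t>ty. u y t \<ge> \<pi> y)) \<and>
           (2 \<le> j \<and> j \<le> CARD('n) - 1 \<longrightarrow> (\<forall>t>ty. u y t = \<pi> y)))"
proof (intro ballI impI)
  fix y assume y: "y \<in> \<Omega>" "\<theta> < y \<bullet> w"
  obtain a b where \<pi>: "\<And>x. \<pi> x = a \<bullet> x + b" using assms(12) by blast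
  obtain B where B: "\<And>x t. x \<in> closure \<Omega> \<Longrightarrow> 0 \<le> t \<Longrightarrow> \<bar>u x t\<bar> \<le> B"
    using visc_solution_bounded[OF assms(1,4-6,9) continuous_on_subset[OF assms(10)] assms(15)] by blast
  have "continuous_on (closure \<Omega>) \<pi>" unfolding \<pi> by (intro continuous_intros)
  then obtain P where P: "\<And>x. x \<in> closure \<Omega> \<Longrightarrow> norm (\<pi> x) \<le> P"
    using continuous_on_compact_bound[OF compact_closure[THEN iffD2, OF assms(4)]] by blast
  have "\<bar>u x t - (a \<bullet> x + b)\<bar> \<le> B + P" if "x \<in> closure \<Omega>" "0 \<le> t" for x t
    using B[OF that] P[OF that(1)] by (simp add: \<pi>)
  moreover have "g x = a \<bullet> x + b" if "x \<in> frontier \<Omega>" "\<theta> < x \<bullet> w" for x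
    using assms(1,14) that by (simp add: \<pi> frontier_def interior_open)
  ultimately obtain ty1 ty2 where "j < CARD('n) \<longrightarrow> (\<forall>t>ty1. u y t \<le> \<pi> y)"
    "2 \<le> j \<longrightarrow> (\<forall>t>ty2. \<pi> y \<le> u y t)"
    using visc_solution_eventually_affine[OF assms(1,4-6,15) _ _ assms(13) y] unfolding \<pi> by metis
  then show "\<exists>ty>0. (j \<le> CARD('n) - 1 \<longrightarrow> (\<forall>t>ty. u y t \<le> \<pi> y)) \<and>
           (2 \<le> j \<longrightarrow> (\<forall>t>ty. u y t \<ge> \<pi> y)) \<and>
           (2 \<le> j \<and> j \<le> CARD('n) - 1 \<longrightarrow> (\<forall>t>ty. u y t = \<pi> y))"
    using assms(5) by (intro exI[of _ "max 1 (max ty1 ty2)"]) (auto intro: order_antisym)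
qed

end
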